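(* Consider the simple receiver case: $u(a,\theta)=\theta-a$ (so $a^\star(\mu)=\mathbb E_\mu[\theta]$ and $a^\star(\delta_\theta)=\theta$), with $V$ satisfying Assumption 1. If $V(a,\theta)$ is convex in $a$ for each $\theta$ and satisfies $V(\theta_1,\theta_2)+V(\theta_2,\theta_1)\le V(\theta_1,\theta_1)+V(\theta_2,\theta_2)$ for all $\theta_1,\theta_2\in\Theta$, then full disclosure is optimal.
   Context: Setting. $A=[0,1]$ is the set of actions and $\overline\Theta=[0,1]$ the set of states. For a compact metric space $X$, $\Delta(X)$ is the set of Borel probability measures on $X$ and $\operatorname{supp}(\eta)$ is the smallest compact set of $\eta$-measure one. The prior is $\phi\in\Delta(\overline\Theta)$, with support $\Theta=\operatorname{supp}(\phi)$. The sender's utility is $V:A\times\overline\Theta\to\mathbb R$, differentiable in $a$ with $v=\partial V/\partial a$ continuous (Assumption 1). $\delta_\theta$ is the Dirac measure at $\theta$; for a posterior $\mu\in\Delta(\Theta)$ the receiver's action is $a^\star(\mu)$. An outcome is $\pi\in\Delta(A\times\Theta)$. It is implementable if (P1) its marginal on $\Theta$ equals $\phi$ and (P2) $\int_{\tilde A\times\Theta}u(a,\theta)\,d\pi(a,\theta)=0$ for every measurable $\tilde A\subset A$. It is optimal if it maximizes $\int V\,d\pi$ over implementable outcomes. The full-disclosure outcome is the image of $\phi$ under the map $\theta\mapsto(a^\star(\delta_\theta),\theta)$; "full disclosure is optimal" means this outcome is optimal. *)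

theory Defs
  imports "HOL-Probability.Probability"
begin

text \<open>Actions and states both live in [0,1]. Measures on reals / pairs of reals carry the
Borel sigma-algebra; a probability measure "in Delta(X)" is a Borel probability measure
giving mass one to X.\<close>

definition supp :: "real measure \<Rightarrow> real set" where
  "supp \<mu> = \<Inter>{C. closed C \<and> emeasure \<mu> (space \<mu> - C) = 0}"

definition is_prior :: "real measure \<Rightarrow> bool" where
  "is_prior \<phi> \<longleftrightarrow> sets \<phi> = sets borel \<and> prob_space \<phi> \<and> emeasure \<phi> {0..1} = 1"

definition implementable ::
  "(real \<Rightarrow> real \<Rightarrow> real) \<Rightarrow> real measure \<Rightarrow> (real \<times> real) measure \<Rightarrow> bool" where
  "implementable u \<phi> \<pi> \<longleftrightarrow>
     sets \<pi> = sets (borel :: (real \<times> real) measure) \<and> prob_space \<pi> \<and>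
     emeasure \<pi> ({0..1} \<times> supp \<phi>) = 1 \<and>
     distr \<pi> borel snd = \<phi> \<and>
     (\<forall>At. At \<in> sets borel \<and> At \<subseteq> {0..1} \<longrightarrow>
        set_lebesgue_integral \<pi> (At \<times> supp \<phi>) (\<lambda>(a, \<theta>). u a \<theta>) = 0)"

definition optimal ::
  "(real \<Rightarrow> real \<Rightarrow> real) \<Rightarrow> (real \<Rightarrow> real \<Rightarrow> real) \<Rightarrow> real measure
     \<Rightarrow> (real \<times> real) measure \<Rightarrow> bool" where
  "optimal u V \<phi> \<pi> \<longleftrightarrow> implementable u \<phi> \<pi> \<and>
     (\<forall>\<rho>. implementable u \<phi> \<rho> \<longrightarrow>
        (\<integral>x. (\<lambda>(a, \<theta>). V a \<theta>) x \<partial>\<rho>) \<le> (\<integral>x. (\<lambda>(a, \<theta>). V a \<theta>) x \<partial>\<pi>))"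

definition full_disclosure ::
  "(real \<Rightarrow> real) \<Rightarrow> real measure \<Rightarrow> (real \<times> real) measure" where
  "full_disclosure astar_dirac \<phi> = distr \<phi> borel (\<lambda>\<theta>. (astar_dirac \<theta>, \<theta>))"

text \<open>Assumption 1: V differentiable in a on A with continuous derivative v.
  (We also take V jointly continuous so that expected utilities are well defined.)\<close>
definition assumption1 :: "(real \<Rightarrow> real \<Rightarrow> real) \<Rightarrow> bool" where
  "assumption1 V \<longleftrightarrow> continuous_on ({0..1} \<times> {0..1}) (\<lambda>(a, \<theta>). V a \<theta>) \<and>
     (\<exists>v. continuous_on ({0..1} \<times> {0..1}) (\<lambda>(a, \<theta>). v a \<theta>) \<and>
        (\<forall>a\<in>{0..1}. \<forall>\<theta>\<in>{0..1}.
           ((\<lambda>b. V b \<theta>) has_real_derivative v a \<theta>) (at a within {0..1})))"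

end

theory Submission
  imports Defs
begin

text \<open>Let \<open>\<rho>\<close> be an implementable outcome and \<open>v = \<partial>V/\<partial>a\<close>. Convexity of \<open>V\<close> in the
  action gives \<open>V(\<theta>', \<theta>) \<ge> V(a, \<theta>) + v(a, \<theta>) (\<theta>' - a)\<close>. Obedience says that the states
  \<open>\<theta>'\<close> leading to the action \<open>a\<close> have mean \<open>a\<close>, so averaging over them kills the linear term:
  \<open>V(a, \<theta>)\<close> is at most the average of \<open>V(\<theta>', \<theta>)\<close>. Averaging once more over \<open>\<theta>\<close> from the same
  pool and symmetrising with \<open>V(\<theta>\<^sub>1, \<theta>\<^sub>2) + V(\<theta>\<^sub>2, \<theta>\<^sub>1) \<le> V(\<theta>\<^sub>1, \<theta>\<^sub>1) + V(\<theta>\<^sub>2, \<theta>\<^sub>2)\<close> bounds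
  the sender's expected utility by \<open>E\<^sub>\<rho> V(\<theta>, \<theta>) = E\<^sub>\<phi> V(\<theta>, \<theta>)\<close>, the value of full disclosure.
  To avoid conditioning on a single action, the actions are grouped into cells of width \<open>1/n\<close>;
  the linear term then no longer vanishes but is at most \<open>sup |v| / n\<close>.\<close>

section \<open>Supports, tangents and bounded extensions\<close>

lemma closed_supp: "closed (supp \<mu>)"
  unfolding supp_def by (rule closed_Inter) auto

lemma supp_subset:
  assumes "closed C" and "emeasure \<mu> (space \<mu> - C) = 0"
  shows "supp \<mu> \<subseteq> C"
  using assms unfolding supp_def by blast

text \<open>The complement of the support is a union of open null sets, and by Lindel\<ouml>f
  countably many of them already cover it.\<close>

lemma emeasure_supp:
  fixes M :: "real measure"
  assumes "prob_space M" and sets_M: "sets M = sets borel"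
  shows "emeasure M (supp M) = 1"
proof -
  interpret prob_space M by fact
  have space_M: "space M = UNIV"
    using sets_eq_imp_space_eq[OF sets_M] by simp
  define \<U> where "\<U> = uminus ` {C. closed C \<and> emeasure M (space M - C) = 0}"
  have "\<And>U. U \<in> \<U> \<Longrightarrow> open U"
    unfolding \<U>_def by auto
  then obtain \<U>' where \<U>': "\<U>' \<subseteq> \<U>" "countable \<U>'" "\<Union>\<U>' = \<Union>\<U>"
    by (rule Lindelof)
  have "\<Union>\<U>' \<in> null_sets M"
  proof (rule null_sets_UN'[OF \<U>'(2), of id, simplified])
    fix U assume "U \<in> \<U>'"
    with \<U>'(1) show "U \<in> null_sets M"
      unfolding \<U>_def using sets_M space_M by (auto simp: null_sets_def Compl_eq_Diff_UNIV)
  qed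
  moreover have "\<Union>\<U> = space M - supp M"
    unfolding \<U>_def supp_def space_M by auto
  ultimately have "prob (space M - supp M) = 0"
    using \<U>'(3) by (simp add: measure_eq_0_null_sets)
  moreover have "supp M \<in> events"
    using sets_M closed_supp by simp
  ultimately show ?thesis
    using prob_compl emeasure_eq_measure by simp
qed

lemma convex_on_Icc_above_tangent:
  fixes f f' :: "real \<Rightarrow> real"
  assumes "l < u" and convex: "convex_on {l..u} f"
    and "continuous_on {l..u} f" "continuous_on {l..u} f'"
    and deriv: "\<And>y. y \<in> {l<..<u} \<Longrightarrow> (f has_real_derivative f' y) (at y within {l..u})"
    and c: "c \<in> {l..u}" and x: "x \<in> {l..u}"
  shows "f c + f' c * (x - c) \<le> f x"
proof -
  let ?g = "\<lambda>y. f x - f y - f' y * (x - y)"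
  have "continuous_on {l..u} ?g"
    using assms(3,4) by (intro continuous_intros)
  moreover have "?g y \<ge> 0" if "y \<in> {l<..<u}" for y
    using convex_on_imp_above_tangent[OF convex connected_Icc _ x deriv[OF that]] that by simp
  ultimately have "?g c \<ge> 0"
    using continuous_ge_on_closure[of "{l<..<u}" ?g c 0] c \<open>l < u\<close> by simp
  then show ?thesis by simp
qed

lemma continuous_on_Times_bounded_measurable_extension:
  fixes f :: "'a::{t2_space, second_countable_topology} \<Rightarrow> 'b::{t2_space, second_countable_topology} \<Rightarrow> real"
  assumes "compact A" "compact B" and cont: "continuous_on (A \<times> B) (\<lambda>(a, b). f a b)"
  obtains g K where "(\<lambda>p. g (fst p) (snd p)) \<in> borel_measurable borel" "\<And>a b. \<bar>g a b\<bar> \<le> K"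
    "\<And>a b. a \<in> A \<Longrightarrow> b \<in> B \<Longrightarrow> g a b = f a b"
proof -
  have "compact (A \<times> B)"
    using assms(1,2) by (rule compact_Times)
  then obtain K where K: "\<And>y. y \<in> (\<lambda>(a, b). f a b) ` (A \<times> B) \<Longrightarrow> \<bar>y\<bar> \<le> K"
    using compact_imp_bounded[OF compact_continuous_image[OF cont]] unfolding bounded_real by blast
  show ?thesis
  proof (rule that[of "\<lambda>a b. indicator (A \<times> B) (a, b) * f a b" "max 0 K"])
    show "(\<lambda>p. indicator (A \<times> B) (fst p, snd p) * f (fst p) (snd p)) \<in> borel_measurable borel"
      using borel_measurable_continuous_on_indicator[OF _ cont] compact_imp_closed[OF \<open>compact (A \<times> B)\<close>]
      by (simp add: case_prod_beta')
    show "\<bar>indicator (A \<times> B) (a, b) * f a b\<bar> \<le> max 0 K" for a b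
      using K[of "f a b"] by (force split: split_indicator)
  qed simp
qed

lemma continuous_on_Times_slice:
  assumes "continuous_on (A \<times> B) (\<lambda>(a, b). f a b)" and "b \<in> B"
  shows "continuous_on A (\<lambda>a. f a b)"
proof -
  have "continuous_on A (\<lambda>a. (\<lambda>(a, b). f a b) (a, b))"
    by (rule continuous_on_compose2[OF assms(1)]) (use assms(2) in \<open>auto intro!: continuous_intros\<close>)
  then show ?thesis
    by simp
qed

section \<open>Integrals over cells and their squares\<close>

lemma (in finite_measure) integrable_indicator_mult:
  fixes g :: "'a \<Rightarrow> real"
  assumes "E \<in> sets M" "g \<in> borel_measurable M" "\<And>x. x \<in> E \<Longrightarrow> \<bar>g x\<bar> \<le> C"
  shows "integrable M (\<lambda>x. indicator E x * g x)"
  by (rule integrable_const_bound[where B="\<bar>C\<bar>"])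
     (use assms in \<open>auto intro: order_trans[OF _ abs_ge_self] split: split_indicator\<close>)

lemma (in finite_measure) abs_integral_indicator_mult_le:
  fixes g :: "'a \<Rightarrow> real"
  assumes E: "E \<in> sets M" and "g \<in> borel_measurable M" and bound: "\<And>x. x \<in> E \<Longrightarrow> \<bar>g x\<bar> \<le> C"
  shows "\<bar>\<integral>x. indicator E x * g x \<partial>M\<bar> \<le> C * measure M E"
proof -
  have "\<bar>\<integral>x. indicator E x * g x \<partial>M\<bar> \<le> (\<integral>x. \<bar>indicator E x * g x\<bar> \<partial>M)"
    by (rule integral_abs_bound)
  also have "\<dots> \<le> (\<integral>x. indicator E x * C \<partial>M)"
    using bound integrable_indicator_mult[OF assms] integrable_indicator_mult[OF E, of "\<lambda>_. C" "\<bar>C\<bar>"]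
    by (intro integral_mono) (auto split: split_indicator)
  also have "\<dots> = C * measure M E"
    using E by simp
  finally show ?thesis .
qed

text \<open>Swapping the variables does not change the double integral over \<open>S \<times> S\<close>, so it is half
  the integral of \<open>f x y + f y x\<close>.\<close>

lemma (in finite_measure) double_integral_le_diagonal:
  fixes f :: "'a \<Rightarrow> 'a \<Rightarrow> real"
  assumes S[measurable]: "S \<in> sets M"
    and f[measurable]: "(\<lambda>z. f (fst z) (snd z)) \<in> borel_measurable (M \<Otimes>\<^sub>M M)"
    and bounded: "\<And>x y. \<bar>f x y\<bar> \<le> B"
    and swap: "\<And>x y. x \<in> S \<Longrightarrow> y \<in> S \<Longrightarrow> f x y + f y x \<le> f x x + f y y"
  shows "(\<integral>x. indicator S x * (\<integral>y. indicator S y * f x y \<partial>M) \<partial>M)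
           \<le> measure M S * (\<integral>x. indicator S x * f x x \<partial>M)"
proof -
  interpret P: pair_sigma_finite M M ..
  interpret P: finite_measure "M \<Otimes>\<^sub>M M"
    by (intro finite_measure_pair_measure) unfold_locales
  let ?I = "\<lambda>z. indicator S (fst z) * indicator S (snd z) :: real"
  define G where "G z = ?I z * f (fst z) (snd z)" for z
  define H where "H z = ?I z * f (fst z) (fst z)" for z
  have f_diag[measurable]: "(\<lambda>x. f x x) \<in> borel_measurable M"
    using measurable_compose[OF measurable_Pair[OF measurable_ident_sets measurable_ident_sets] f]
    by simp
  have [measurable]: "G \<in> borel_measurable (M \<Otimes>\<^sub>M M)" "H \<in> borel_measurable (M \<Otimes>\<^sub>M M)"
    unfolding G_def H_def by measurable
  have "0 \<le> B"
    using bounded abs_ge_zero order_trans by blast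
  then have int_G: "integrable (M \<Otimes>\<^sub>M M) G" and int_H: "integrable (M \<Otimes>\<^sub>M M) H"
    unfolding G_def H_def using bounded
    by (auto intro!: P.integrable_const_bound[where B=B] simp: abs_mult split: split_indicator)
  have swap_G: "integral\<^sup>L (M \<Otimes>\<^sub>M M) (\<lambda>(x, y). G (y, x)) = integral\<^sup>L (M \<Otimes>\<^sub>M M) G"
    and swap_H: "integral\<^sup>L (M \<Otimes>\<^sub>M M) (\<lambda>(x, y). H (y, x)) = integral\<^sup>L (M \<Otimes>\<^sub>M M) H"
    by (simp_all add: P.integral_product_swap)
  have int_swap: "integrable (M \<Otimes>\<^sub>M M) (\<lambda>(x, y). G (y, x))" "integrable (M \<Otimes>\<^sub>M M) (\<lambda>(x, y). H (y, x))"
    using P.integrable_product_swap[OF int_G] P.integrable_product_swap[OF int_H] by auto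
  have "2 * integral\<^sup>L (M \<Otimes>\<^sub>M M) G = (\<integral>z. G z + (\<lambda>(x, y). G (y, x)) z \<partial>(M \<Otimes>\<^sub>M M))"
    using int_G int_swap swap_G by simp
  also have "\<dots> \<le> (\<integral>z. H z + (\<lambda>(x, y). H (y, x)) z \<partial>(M \<Otimes>\<^sub>M M))"
    by (intro integral_mono Bochner_Integration.integrable_add int_G int_H int_swap)
       (use swap in \<open>auto simp: G_def H_def split: split_indicator\<close>)
  also have "\<dots> = 2 * integral\<^sup>L (M \<Otimes>\<^sub>M M) H"
    using int_H int_swap swap_H by simp
  finally have "integral\<^sup>L (M \<Otimes>\<^sub>M M) G \<le> integral\<^sup>L (M \<Otimes>\<^sub>M M) H"
    by simp
  moreover have "integral\<^sup>L (M \<Otimes>\<^sub>M M) G = (\<integral>x. indicator S x * (\<integral>y. indicator S y * f x y \<partial>M) \<partial>M)"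
    using P.integral_fst'[OF int_G] by (simp add: G_def mult.assoc)
  moreover have "integral\<^sup>L (M \<Otimes>\<^sub>M M) H = (\<integral>x. measure M S * (indicator S x * f x x) \<partial>M)"
    using P.integral_fst'[OF int_H, symmetric] by (simp add: H_def mult.left_commute mult.assoc)
  then have "integral\<^sup>L (M \<Otimes>\<^sub>M M) H = measure M S * (\<integral>x. indicator S x * f x x \<partial>M)"
    by (simp only: integral_mult_right_zero)
  ultimately show ?thesis by simp
qed

definition grid_cell :: "nat \<Rightarrow> nat \<Rightarrow> real set" where
  "grid_cell n k = {a \<in> {0..1}. \<lfloor>a * real n\<rfloor> = int k}"

lemma grid_cell_borel[measurable]: "grid_cell n k \<in> sets borel"
  unfolding grid_cell_def by measurable

lemma grid_cell_subset: "grid_cell n k \<subseteq> {0..1}"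
  unfolding grid_cell_def by auto

lemma grid_cell_diameter:
  assumes "0 < n" and "a \<in> grid_cell n k" and "b \<in> grid_cell n k"
  shows "\<bar>a - b\<bar> \<le> 1 / real n"
proof -
  have "\<bar>a * real n - b * real n\<bar> \<le> 1"
    using assms(2,3) floor_correct[of "a * real n"] floor_correct[of "b * real n"]
    unfolding grid_cell_def by auto
  then have "\<bar>a - b\<bar> * real n \<le> 1"
    by (simp add: left_diff_distrib[symmetric] abs_mult)
  then show ?thesis
    using \<open>0 < n\<close> by (simp add: field_simps)
qed

lemma sum_indicator_grid_cell:
  "(\<Sum>k\<le>n. indicator (grid_cell n k) a) = (indicator {0..1} a :: real)"
proof (cases "a \<in> {0..1}")
  case True
  then have "0 \<le> a * real n" "a * real n \<le> real n"
    by (auto simp: mult_left_le_one_le)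
  then have "nat \<lfloor>a * real n\<rfloor> \<le> n" "\<lfloor>a * real n\<rfloor> = int (nat \<lfloor>a * real n\<rfloor>)"
    by (auto simp: nat_le_iff floor_le_iff)
  then have "(\<Sum>k\<le>n. indicator (grid_cell n k) a :: real) = (\<Sum>k\<le>n. if k = nat \<lfloor>a * real n\<rfloor> then 1 else 0)"
    using True by (intro sum.cong) (auto simp: grid_cell_def)
  also have "\<dots> = 1"
    using \<open>nat \<lfloor>a * real n\<rfloor> \<le> n\<close> by simp
  finally show ?thesis
    using True by simp
qed (auto simp: grid_cell_def indicator_def)

section \<open>The sender's expected utility under an obedient outcome\<close>

text \<open>Condition (P2) for \<open>u a \<theta> = \<theta> - a\<close>: on every set of actions, the action is the mean
  state.\<close>

locale obedient_outcome = prob_space \<rho> for \<rho> :: "(real \<times> real) measure" +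
  fixes \<Theta> :: "real set"
  assumes sets_eq_borel: "sets \<rho> = sets borel"
    and \<Theta>_borel[measurable]: "\<Theta> \<in> sets borel"
    and \<Theta>_subset: "\<Theta> \<subseteq> {0..1}"
    and AE_support: "AE p in \<rho>. p \<in> {0..1} \<times> \<Theta>"
    and obedience: "\<And>B. B \<in> sets borel \<Longrightarrow> B \<subseteq> {0..1} \<Longrightarrow>
      (\<integral>p. indicator (B \<times> \<Theta>) p * (snd p - fst p) \<partial>\<rho>) = 0"
begin

lemma sets_eq_pair_borel[measurable_cong]: "sets \<rho> = sets (borel \<Otimes>\<^sub>M borel)"
  unfolding borel_prod by (rule sets_eq_borel)

lemma integral_cong_support:
  fixes f g :: "real \<times> real \<Rightarrow> real"
  assumes "f \<in> borel_measurable borel" and "g \<in> borel_measurable borel"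
    and "\<And>a \<theta>. a \<in> {0..1} \<Longrightarrow> \<theta> \<in> \<Theta> \<Longrightarrow> f (a, \<theta>) = g (a, \<theta>)"
  shows "integral\<^sup>L \<rho> f = integral\<^sup>L \<rho> g"
  using AE_support assms by (intro integral_cong_AE) (auto simp: measurable_cong_sets[OF sets_eq_borel])

lemma integral_eq_sum_grid_cells:
  fixes g :: "real \<times> real \<Rightarrow> real"
  assumes [measurable]: "g \<in> borel_measurable (borel \<Otimes>\<^sub>M borel)" and bounded: "\<And>p. \<bar>g p\<bar> \<le> C"
  shows "(\<integral>p. g p \<partial>\<rho>) = (\<Sum>k\<le>n. \<integral>p. indicator (grid_cell n k \<times> \<Theta>) p * g p \<partial>\<rho>)"
proof -
  have sum_cells: "(\<Sum>k\<le>n. indicator (grid_cell n k \<times> \<Theta>) p * g p) = indicator ({0..1} \<times> \<Theta>) p * g p" for p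
    using sum_distrib_right[of "\<lambda>k. indicator (grid_cell n k) (fst p)" "{..n}" "indicator \<Theta> (snd p) * g p", symmetric]
    by (simp add: indicator_times sum_indicator_grid_cell mult.assoc)
  have "(\<integral>p. g p \<partial>\<rho>) = (\<integral>p. (\<Sum>k\<le>n. indicator (grid_cell n k \<times> \<Theta>) p * g p) \<partial>\<rho>)"
  proof (rule integral_cong_AE)
    show "AE p in \<rho>. g p = (\<Sum>k\<le>n. indicator (grid_cell n k \<times> \<Theta>) p * g p)"
      using AE_support by eventually_elim (simp add: sum_cells)
  qed measurable
  also have "\<dots> = (\<Sum>k\<le>n. \<integral>p. indicator (grid_cell n k \<times> \<Theta>) p * g p \<partial>\<rho>)"
    by (intro Bochner_Integration.integral_sum integrable_indicator_mult[where C=C] bounded) measurable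
  finally show ?thesis .
qed

end

locale convex_sender = obedient_outcome +
  fixes W v :: "real \<Rightarrow> real \<Rightarrow> real" and K M :: real
  assumes W_measurable: "(\<lambda>p. W (fst p) (snd p)) \<in> borel_measurable borel"
    and W_bounded: "\<And>a \<theta>. \<bar>W a \<theta>\<bar> \<le> K"
    and v_bounded: "\<And>a \<theta>. a \<in> {0..1} \<Longrightarrow> \<theta> \<in> \<Theta> \<Longrightarrow> \<bar>v a \<theta>\<bar> \<le> M"
    and above_tangent: "\<And>a x \<theta>. a \<in> {0..1} \<Longrightarrow> x \<in> \<Theta> \<Longrightarrow> \<theta> \<in> \<Theta> \<Longrightarrow>
      W a \<theta> + v a \<theta> * (x - a) \<le> W x \<theta>"
    and swap_le_diagonal: "\<And>\<theta> \<theta>'. \<theta> \<in> \<Theta> \<Longrightarrow> \<theta>' \<in> \<Theta> \<Longrightarrow>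
      W \<theta> \<theta>' + W \<theta>' \<theta> \<le> W \<theta> \<theta> + W \<theta>' \<theta>'"
begin

lemma W_measurable_comp[measurable (raw)]:
  "f \<in> borel_measurable N \<Longrightarrow> g \<in> borel_measurable N \<Longrightarrow> (\<lambda>x. W (f x) (g x)) \<in> borel_measurable N"
  using measurable_compose[OF measurable_Pair W_measurable[unfolded borel_prod[symmetric]], of f N g]
  by simp

lemma cell_integral_above_tangent:
  assumes B[measurable]: "B \<in> sets borel" and "B \<subseteq> {0..1}"
    and diameter: "\<And>a a'. a \<in> B \<Longrightarrow> a' \<in> B \<Longrightarrow> \<bar>a - a'\<bar> \<le> \<delta>"
    and a: "a \<in> B" and \<theta>: "\<theta> \<in> \<Theta>"
  shows "measure \<rho> (B \<times> \<Theta>) * (W a \<theta> - M * \<delta>)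
           \<le> (\<integral>q. indicator (B \<times> \<Theta>) q * W (snd q) \<theta> \<partial>\<rho>)"
proof -
  define E where "E = B \<times> \<Theta>"
  have E[measurable]: "E \<in> sets \<rho>"
    unfolding E_def by measurable
  have in_E: "fst q \<in> B" "fst q \<in> {0..1}" "snd q \<in> \<Theta>" "snd q \<in> {0..1}" if "q \<in> E" for q
    using that \<open>B \<subseteq> {0..1}\<close> \<Theta>_subset unfolding E_def by auto
  have a01: "a \<in> {0..1}"
    using a \<open>B \<subseteq> {0..1}\<close> by auto
  txt \<open>By obedience, the mean state on the cell equals the mean action, which is within \<open>\<delta>\<close>
    of \<open>a\<close>; \<open>X\<close> is the error.\<close>
  define X where "X = (\<integral>q. indicator E q * (fst q - a) \<partial>\<rho>)"
  have "\<bar>X\<bar> \<le> \<delta> * measure \<rho> E"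
    unfolding X_def using diameter a in_E by (intro abs_integral_indicator_mult_le) auto
  then have vX: "\<bar>v a \<theta> * X\<bar> \<le> M * (\<delta> * measure \<rho> E)"
    unfolding abs_mult using v_bounded[OF a01 \<theta>] by (intro mult_mono) auto
  have int_fst: "integrable \<rho> (\<lambda>q. indicator E q * (fst q - a))"
    using diameter a in_E by (intro integrable_indicator_mult[where C=\<delta>]) auto
  have int_diff: "integrable \<rho> (\<lambda>q. indicator E q * (snd q - fst q))"
  proof (rule integrable_indicator_mult[where C=1])
    show "\<bar>snd q - fst q\<bar> \<le> 1" if "q \<in> E" for q
      using in_E[OF that] by auto
  qed measurable
  have int_const: "integrable \<rho> (\<lambda>q. indicator E q * W a \<theta>)"
    by (intro integrable_indicator_mult[where C="\<bar>W a \<theta>\<bar>"]) auto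
  let ?tangent = "\<lambda>q. indicator E q * W a \<theta> + v a \<theta> * (indicator E q * (fst q - a))
                   + v a \<theta> * (indicator E q * (snd q - fst q))"
  have "measure \<rho> E * W a \<theta> + v a \<theta> * X = (\<integral>q. ?tangent q \<partial>\<rho>)"
    using obedience[OF B \<open>B \<subseteq> {0..1}\<close>] int_fst int_diff int_const
    by (simp add: X_def E_def)
  also have "\<dots> \<le> (\<integral>q. indicator E q * W (snd q) \<theta> \<partial>\<rho>)"
  proof (rule integral_mono)
    show "integrable \<rho> ?tangent"
      using int_const int_fst int_diff by simp
    show "integrable \<rho> (\<lambda>q. indicator E q * W (snd q) \<theta>)"
      using W_bounded by (intro integrable_indicator_mult[where C=K]) auto
    show "?tangent q \<le> indicator E q * W (snd q) \<theta>" for q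
      using above_tangent[OF a01 _ \<theta>, of "snd q"] in_E[of q]
      by (auto simp: algebra_simps split: split_indicator)
  qed
  finally show ?thesis
    using vX unfolding E_def by (auto simp: algebra_simps)
qed

lemma cell_integral_le_diagonal:
  assumes B[measurable]: "B \<in> sets borel" and "B \<subseteq> {0..1}"
    and diameter: "\<And>a a'. a \<in> B \<Longrightarrow> a' \<in> B \<Longrightarrow> \<bar>a - a'\<bar> \<le> \<delta>"
  shows "(\<integral>p. indicator (B \<times> \<Theta>) p * W (fst p) (snd p) \<partial>\<rho>)
           \<le> (\<integral>p. indicator (B \<times> \<Theta>) p * W (snd p) (snd p) \<partial>\<rho>) + M * \<delta> * measure \<rho> (B \<times> \<Theta>)"
    (is "?A \<le> ?D + M * \<delta> * ?m")
proof -
  define E where "E = B \<times> \<Theta>"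
  have E[measurable]: "E \<in> sets \<rho>"
    unfolding E_def by measurable
  have in_E: "fst p \<in> B" "snd p \<in> \<Theta>" if "p \<in> E" for p
    using that unfolding E_def by auto
  have int_A: "integrable \<rho> (\<lambda>p. indicator E p * W (fst p) (snd p))"
    using W_bounded by (intro integrable_indicator_mult[where C=K]) auto
  have int_E: "integrable \<rho> (indicator E :: _ \<Rightarrow> real)"
    using integrable_indicator_mult[OF E, of "\<lambda>_. 1" 1] by simp
  have abs_A: "\<bar>?A\<bar> \<le> K * ?m" and abs_D: "\<bar>?D\<bar> \<le> K * ?m"
    using W_bounded by (intro abs_integral_indicator_mult_le; simp)+
  have inner: "indicator E p * (?m * (W (fst p) (snd p) - M * \<delta>))
      \<le> indicator E p * (\<integral>q. indicator E q * W (snd q) (snd p) \<partial>\<rho>)" for p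
    using cell_integral_above_tangent[OF B \<open>B \<subseteq> {0..1}\<close> diameter, of "fst p" "snd p"] in_E[of p]
    by (auto simp: E_def mult.commute split: split_indicator)
  have "?m * ?A - ?m * M * \<delta> * ?m
      = (\<integral>p. ?m * (indicator E p * W (fst p) (snd p)) - (?m * M * \<delta>) * indicator E p \<partial>\<rho>)"
    using int_A int_E by (subst Bochner_Integration.integral_diff) (auto simp: E_def)
  also have "\<dots> \<le> (\<integral>p. indicator E p * (\<integral>q. indicator E q * W (snd q) (snd p) \<partial>\<rho>) \<partial>\<rho>)"
  proof (rule integral_mono)
    show "integrable \<rho> (\<lambda>p. ?m * (indicator E p * W (fst p) (snd p)) - (?m * M * \<delta>) * indicator E p)"
      using int_A int_E by simp
    show "?m * (indicator E p * W (fst p) (snd p)) - (?m * M * \<delta>) * indicator E p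
        \<le> indicator E p * (\<integral>q. indicator E q * W (snd q) (snd p) \<partial>\<rho>)" for p
      using inner[of p] by (simp add: algebra_simps)
    have "\<bar>\<integral>q. indicator E q * W (snd q) \<theta> \<partial>\<rho>\<bar> \<le> K * ?m" for \<theta>
      using W_bounded unfolding E_def by (intro abs_integral_indicator_mult_le) auto
    then show "integrable \<rho> (\<lambda>p. indicator E p * (\<integral>q. indicator E q * W (snd q) (snd p) \<partial>\<rho>))"
      by (intro integrable_indicator_mult[where C="K * ?m"]) auto
  qed
  also have "\<dots> \<le> ?m * ?D"
    using double_integral_le_diagonal[OF E, of "\<lambda>p q. W (snd q) (snd p)" K] W_bounded
      swap_le_diagonal in_E
    by (simp add: E_def add.commute)
  finally have "?m * ?A \<le> ?m * (?D + M * \<delta> * ?m)"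
    by (simp add: algebra_simps)
  moreover have "?m = 0 \<Longrightarrow> ?A \<le> ?D"
    using abs_A abs_D by simp
  ultimately show ?thesis
    using measure_nonneg[of \<rho> "B \<times> \<Theta>"] by (cases "?m = 0") (auto simp: mult_le_cancel_left_pos)
qed

lemma integral_le_diagonal_plus:
  assumes "0 < n"
  shows "(\<integral>p. W (fst p) (snd p) \<partial>\<rho>) \<le> (\<integral>p. W (snd p) (snd p) \<partial>\<rho>) + M / real n"
proof -
  let ?E = "\<lambda>k. grid_cell n k \<times> \<Theta>"
  have "(\<integral>p. W (fst p) (snd p) \<partial>\<rho>) = (\<Sum>k\<le>n. \<integral>p. indicator (?E k) p * W (fst p) (snd p) \<partial>\<rho>)"
    using W_bounded by (intro integral_eq_sum_grid_cells[where C=K]) auto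
  also have "\<dots> \<le> (\<Sum>k\<le>n. (\<integral>p. indicator (?E k) p * W (snd p) (snd p) \<partial>\<rho>)
                            + M * (1 / real n) * measure \<rho> (?E k))"
    by (intro sum_mono cell_integral_le_diagonal grid_cell_borel grid_cell_subset
        grid_cell_diameter[OF \<open>0 < n\<close>])
  also have "\<dots> = (\<integral>p. W (snd p) (snd p) \<partial>\<rho>) + M / real n * (\<Sum>k\<le>n. measure \<rho> (?E k))"
    using integral_eq_sum_grid_cells[of "\<lambda>p. W (snd p) (snd p)" K n] W_bounded
    by (simp add: sum.distrib sum_distrib_left)
  also have "(\<Sum>k\<le>n. measure \<rho> (?E k)) = 1"
    using integral_eq_sum_grid_cells[of "\<lambda>_. 1" 1 n] prob_space by simp
  finally show ?thesis by simp
qed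

lemma integral_le_diagonal: "(\<integral>p. W (fst p) (snd p) \<partial>\<rho>) \<le> (\<integral>p. W (snd p) (snd p) \<partial>\<rho>)"
proof (rule LIMSEQ_le_const)
  show "(\<lambda>n. (\<integral>p. W (snd p) (snd p) \<partial>\<rho>) + M / real n) \<longlonglongrightarrow> (\<integral>p. W (snd p) (snd p) \<partial>\<rho>)"
    using tendsto_add[OF tendsto_const lim_const_over_n[of M]] by simp
  show "\<exists>N. \<forall>n\<ge>N. (\<integral>p. W (fst p) (snd p) \<partial>\<rho>) \<le> (\<integral>p. W (snd p) (snd p) \<partial>\<rho>) + M / real n"
    using integral_le_diagonal_plus by (intro exI[of _ 1]) auto
qed

end

section \<open>Optimality of full disclosure\<close>

lemma prior_supp_subset:
  assumes "is_prior \<phi>"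
  shows "supp \<phi> \<subseteq> {0..1}"
proof (rule supp_subset)
  interpret prob_space \<phi>
    using assms by (simp add: is_prior_def)
  have events: "{0..1} \<in> events"
    using assms by (simp add: is_prior_def)
  show "emeasure \<phi> (space \<phi> - {0..1}) = 0"
    using assms emeasure_compl[OF events] emeasure_space_1 by (simp add: is_prior_def)
qed simp

lemma prior_emeasure_supp: "is_prior \<phi> \<Longrightarrow> emeasure \<phi> (supp \<phi>) = 1"
  unfolding is_prior_def by (intro emeasure_supp) auto

lemma implementable_full_disclosure:
  assumes prior: "is_prior \<phi>" and u: "(\<lambda>(a, \<theta>). u a \<theta>) \<in> borel_measurable borel"
    and diagonal: "\<And>\<theta>. u \<theta> \<theta> = 0"
  shows "implementable u \<phi> (full_disclosure (\<lambda>\<theta>. \<theta>) \<phi>)"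
  unfolding implementable_def
proof (intro conjI allI impI)
  have sets_\<phi>: "sets \<phi> = sets borel" and "prob_space \<phi>"
    using prior unfolding is_prior_def by auto
  interpret \<phi>: prob_space \<phi> by fact
  have space_\<phi>: "space \<phi> = UNIV"
    using sets_eq_imp_space_eq[OF sets_\<phi>] by simp
  have diag[measurable]: "(\<lambda>\<theta>. (\<theta>, \<theta>)) \<in> measurable \<phi> borel"
    unfolding measurable_cong_sets[OF sets_\<phi> refl] borel_prod[symmetric] by measurable
  have supp[measurable]: "supp \<phi> \<in> sets borel"
    using closed_supp by simp
  have fd: "full_disclosure (\<lambda>\<theta>. \<theta>) \<phi> = distr \<phi> borel (\<lambda>\<theta>. (\<theta>, \<theta>))"
    unfolding full_disclosure_def ..
  show "sets (full_disclosure (\<lambda>\<theta>. \<theta>) \<phi>) = sets borel"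
    unfolding fd by simp
  show "prob_space (full_disclosure (\<lambda>\<theta>. \<theta>) \<phi>)"
    unfolding fd by (rule \<phi>.prob_space_distr[OF diag])
  have "{0..1::real} \<times> supp \<phi> \<in> sets borel"
    using pair_measureI[of "{0..1::real}" borel "supp \<phi>" borel] unfolding borel_prod by simp
  moreover have "(\<lambda>\<theta>. (\<theta>, \<theta>)) -` ({0..1} \<times> supp \<phi>) \<inter> space \<phi> = supp \<phi>"
    using prior_supp_subset[OF prior] space_\<phi> by auto
  ultimately show "emeasure (full_disclosure (\<lambda>\<theta>. \<theta>) \<phi>) ({0..1} \<times> supp \<phi>) = 1"
    unfolding fd using prior_emeasure_supp[OF prior] by (simp add: emeasure_distr)
  have "snd \<in> measurable (borel :: (real \<times> real) measure) borel"
    unfolding borel_prod[symmetric] by measurable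
  then show "distr (full_disclosure (\<lambda>\<theta>. \<theta>) \<phi>) borel snd = \<phi>"
    unfolding fd by (simp add: distr_distr comp_def distr_id2 sets_\<phi>)
  fix A :: "real set"
  assume "A \<in> sets borel \<and> A \<subseteq> {0..1}"
  then have [measurable]: "A \<in> sets borel" by simp
  have "(\<lambda>p. indicator (A \<times> supp \<phi>) p *\<^sub>R (case p of (a, \<theta>) \<Rightarrow> u a \<theta>)) \<in> borel_measurable borel"
    using u unfolding borel_prod[symmetric] by measurable
  then show "set_lebesgue_integral (full_disclosure (\<lambda>\<theta>. \<theta>) \<phi>) (A \<times> supp \<phi>) (\<lambda>(a, \<theta>). u a \<theta>) = 0"
    unfolding set_lebesgue_integral_def fd by (simp add: integral_distr diagonal)
qed

lemma integral_full_disclosure: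
  fixes f :: "real \<times> real \<Rightarrow> real"
  assumes "is_prior \<phi>" and f: "f \<in> borel_measurable borel"
  shows "(\<integral>p. f p \<partial>full_disclosure (\<lambda>\<theta>. \<theta>) \<phi>) = (\<integral>\<theta>. f (\<theta>, \<theta>) \<partial>\<phi>)"
proof -
  have "sets \<phi> = sets borel"
    using assms(1) by (simp add: is_prior_def)
  then have "(\<lambda>\<theta>. (\<theta>, \<theta>)) \<in> measurable \<phi> borel"
    unfolding measurable_cong_sets[OF _ refl] borel_prod[symmetric] by measurable
  then show ?thesis
    unfolding full_disclosure_def using f by (simp add: integral_distr)
qed

lemma obedient_outcome_of_implementable:
  assumes prior: "is_prior \<phi>" and "implementable (\<lambda>a \<theta>. \<theta> - a) \<phi> \<rho>"
  shows "obedient_outcome \<rho> (supp \<phi>)"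
proof -
  have sets_\<rho>: "sets \<rho> = sets borel" and "prob_space \<rho>"
    and support: "emeasure \<rho> ({0..1} \<times> supp \<phi>) = 1"
    and P2: "\<And>B. B \<in> sets borel \<Longrightarrow> B \<subseteq> {0..1} \<Longrightarrow>
      set_lebesgue_integral \<rho> (B \<times> supp \<phi>) (\<lambda>(a, \<theta>). \<theta> - a) = 0"
    using assms(2) unfolding implementable_def by auto
  interpret prob_space \<rho> by fact
  show ?thesis
  proof unfold_locales
    show "supp \<phi> \<in> sets borel"
      using closed_supp by simp
    show "supp \<phi> \<subseteq> {0..1}"
      using prior by (rule prior_supp_subset)
    have "{0..1::real} \<times> supp \<phi> \<in> events"
      using pair_measureI[of "{0..1::real}" borel "supp \<phi>" borel] closed_supp
      unfolding sets_\<rho> borel_prod by simp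
    then show "AE p in \<rho>. p \<in> {0..1} \<times> supp \<phi>"
      using support by (simp add: AE_in_set_eq_1 emeasure_eq_measure)
    show "(\<integral>p. indicator (B \<times> supp \<phi>) p * (snd p - fst p) \<partial>\<rho>) = 0"
      if "B \<in> sets borel" "B \<subseteq> {0..1}" for B
      using P2[OF that] by (simp add: set_lebesgue_integral_def case_prod_beta)
  qed (fact sets_\<rho>)
qed

lemma value_le_full_disclosure:
  assumes prior: "is_prior \<phi>" and impl: "implementable (\<lambda>a \<theta>. \<theta> - a) \<phi> \<rho>"
    and "convex_sender \<rho> (supp \<phi>) W v K M"
    and W_eq: "\<And>a \<theta>. a \<in> {0..1} \<Longrightarrow> \<theta> \<in> {0..1} \<Longrightarrow> W a \<theta> = V a \<theta>"
  shows "(\<integral>p. (\<lambda>(a, \<theta>). V a \<theta>) p \<partial>\<rho>) \<le> (\<integral>p. (\<lambda>(a, \<theta>). V a \<theta>) p \<partial>full_disclosure (\<lambda>\<theta>. \<theta>) \<phi>)"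
proof -
  interpret convex_sender \<rho> "supp \<phi>" W v K M by fact
  let ?V = "\<lambda>(a, \<theta>). V a \<theta>"
  show ?thesis
  proof (cases "?V \<in> borel_measurable borel")
    case True
    have snd_snd: "(\<lambda>p::real \<times> real. (snd p, snd p)) \<in> borel_measurable borel"
      unfolding borel_prod[symmetric] by measurable
    have "integral\<^sup>L \<rho> ?V = (\<integral>p. W (fst p) (snd p) \<partial>\<rho>)"
      using True W_measurable W_eq \<Theta>_subset by (intro integral_cong_support) auto
    also have "\<dots> \<le> (\<integral>p. W (snd p) (snd p) \<partial>\<rho>)"
      by (rule integral_le_diagonal)
    also have "\<dots> = (\<integral>p. V (snd p) (snd p) \<partial>\<rho>)"
      using measurable_compose[OF snd_snd W_measurable] measurable_compose[OF snd_snd True]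
        W_eq \<Theta>_subset
      by (intro integral_cong_support) auto
    also have "\<dots> = (\<integral>\<theta>. V \<theta> \<theta> \<partial>distr \<rho> borel snd)"
    proof (rule integral_distr[symmetric])
      show "snd \<in> measurable \<rho> borel"
        by (simp add: measurable_cong_sets[OF sets_eq_pair_borel])
      have diag: "(\<lambda>\<theta>::real. (\<theta>, \<theta>)) \<in> borel_measurable borel"
        unfolding borel_prod[symmetric] by measurable
      show "(\<lambda>\<theta>. V \<theta> \<theta>) \<in> borel_measurable borel"
        using measurable_compose[OF diag True] by simp
    qed
    also have "\<dots> = (\<integral>\<theta>. V \<theta> \<theta> \<partial>\<phi>)"
      using impl by (simp add: implementable_def)
    also have "\<dots> = integral\<^sup>L (full_disclosure (\<lambda>\<theta>. \<theta>) \<phi>) ?V"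
      using integral_full_disclosure[OF prior True] by simp
    finally show ?thesis .
  next
    case False
    txt \<open>Then \<open>?V\<close> is integrable for neither outcome and both expected utilities are \<open>0\<close>.\<close>
    then have "\<not> integrable \<rho> ?V" "\<not> integrable (full_disclosure (\<lambda>\<theta>. \<theta>) \<phi>) ?V"
      using borel_measurable_integrable
      by (auto simp: measurable_cong_sets[OF sets_eq_borel] full_disclosure_def)
    then show ?thesis
      by (simp add: not_integrable_integral_eq)
  qed
qed

lemma assumption1_above_tangent:
  assumes "assumption1 V" and convex: "\<And>\<theta>. \<theta> \<in> {0..1} \<Longrightarrow> convex_on {0..1} (\<lambda>a. V a \<theta>)"
  obtains v where "continuous_on ({0..1} \<times> {0..1}) (\<lambda>(a, \<theta>). v a \<theta>)"
    and "\<And>a x \<theta>. a \<in> {0..1} \<Longrightarrow> x \<in> {0..1} \<Longrightarrow> \<theta> \<in> {0..1} \<Longrightarrow> V a \<theta> + v a \<theta> * (x - a) \<le> V x \<theta>"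
proof -
  obtain v where cont_V: "continuous_on ({0..1} \<times> {0..1}) (\<lambda>(a, \<theta>). V a \<theta>)"
    and cont_v: "continuous_on ({0..1} \<times> {0..1}) (\<lambda>(a, \<theta>). v a \<theta>)"
    and deriv: "\<And>a \<theta>. a \<in> {0..1} \<Longrightarrow> \<theta> \<in> {0..1} \<Longrightarrow>
      ((\<lambda>b. V b \<theta>) has_real_derivative v a \<theta>) (at a within {0..1})"
    using assms(1) unfolding assumption1_def by blast
  show ?thesis
  proof (rule that[OF cont_v])
    fix a x \<theta> :: real assume "a \<in> {0..1}" "x \<in> {0..1}" "\<theta> \<in> {0..1}"
    then show "V a \<theta> + v a \<theta> * (x - a) \<le> V x \<theta>"
      using continuous_on_Times_slice[OF cont_V] continuous_on_Times_slice[OF cont_v] deriv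
      by (intro convex_on_Icc_above_tangent[of 0 1, OF _ convex]) auto
  qed
qed

lemma assumption1_convex_sender_axioms:
  assumes "assumption1 V" and convex: "\<And>\<theta>. \<theta> \<in> {0..1} \<Longrightarrow> convex_on {0..1} (\<lambda>a. V a \<theta>)"
    and "\<Theta> \<subseteq> {0..1}"
    and swap: "\<And>\<theta> \<theta>'. \<theta> \<in> \<Theta> \<Longrightarrow> \<theta>' \<in> \<Theta> \<Longrightarrow> V \<theta> \<theta>' + V \<theta>' \<theta> \<le> V \<theta> \<theta> + V \<theta>' \<theta>'"
  obtains W v K M where "convex_sender_axioms \<Theta> W v K M"
    and "\<And>a \<theta>. a \<in> {0..1} \<Longrightarrow> \<theta> \<in> {0..1} \<Longrightarrow> W a \<theta> = V a \<theta>"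
proof -
  obtain v where cont_v: "continuous_on ({0..1} \<times> {0..1}) (\<lambda>(a, \<theta>). v a \<theta>)"
    and tangent: "\<And>a x \<theta>. a \<in> {0..1} \<Longrightarrow> x \<in> {0..1} \<Longrightarrow> \<theta> \<in> {0..1} \<Longrightarrow>
      V a \<theta> + v a \<theta> * (x - a) \<le> V x \<theta>"
    using assumption1_above_tangent[OF assms(1) convex] by blast
  have cont_V: "continuous_on ({0..1} \<times> {0..1}) (\<lambda>(a, \<theta>). V a \<theta>)"
    using assms(1) unfolding assumption1_def by blast
  obtain W K where W: "(\<lambda>p. W (fst p) (snd p)) \<in> borel_measurable borel" "\<And>a \<theta>. \<bar>W a \<theta>\<bar> \<le> K"
    and W_eq: "\<And>a \<theta>. a \<in> {0..1} \<Longrightarrow> \<theta> \<in> {0..1} \<Longrightarrow> W a \<theta> = V a \<theta>"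
    by (rule continuous_on_Times_bounded_measurable_extension[OF compact_Icc compact_Icc cont_V]) iprover
  obtain v' M where "\<And>a \<theta>. \<bar>v' a \<theta>\<bar> \<le> M" "\<And>a \<theta>. a \<in> {0..1} \<Longrightarrow> \<theta> \<in> {0..1} \<Longrightarrow> v' a \<theta> = v a \<theta>"
    by (rule continuous_on_Times_bounded_measurable_extension[OF compact_Icc compact_Icc cont_v]) iprover
  then have v_bounded: "\<And>a \<theta>. a \<in> {0..1} \<Longrightarrow> \<theta> \<in> {0..1} \<Longrightarrow> \<bar>v a \<theta>\<bar> \<le> M"
    by metis
  note \<Theta> = \<open>\<Theta> \<subseteq> {0..1}\<close>[THEN subsetD]
  have sender: "convex_sender_axioms \<Theta> W v K M"
  proof (intro convex_sender_axioms.intro W)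
    show "\<bar>v a \<theta>\<bar> \<le> M" if "a \<in> {0..1}" "\<theta> \<in> \<Theta>" for a \<theta>
      using that v_bounded \<Theta> by blast
    show "W a \<theta> + v a \<theta> * (x - a) \<le> W x \<theta>" if "a \<in> {0..1}" "x \<in> \<Theta>" "\<theta> \<in> \<Theta>" for a x \<theta>
      using tangent[OF that(1) \<Theta> \<Theta>] W_eq[OF that(1) \<Theta>] W_eq[OF \<Theta> \<Theta>] that by simp
    show "W \<theta> \<theta>' + W \<theta>' \<theta> \<le> W \<theta> \<theta> + W \<theta>' \<theta>'" if "\<theta> \<in> \<Theta>" "\<theta>' \<in> \<Theta>" for \<theta> \<theta>'
      using swap[OF that] W_eq \<Theta> that by simp
  qed
  show ?thesis
    by (rule that[OF sender W_eq])
qed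

theorem corollary2:
  fixes V :: "real \<Rightarrow> real \<Rightarrow> real" and \<phi> :: "real measure"
  assumes "is_prior \<phi>"
    and "assumption1 V"
    and "\<And>\<theta>. \<theta> \<in> {0..1} \<Longrightarrow> convex_on {0..1} (\<lambda>a. V a \<theta>)"
    and "\<And>\<theta>1 \<theta>2. \<theta>1 \<in> supp \<phi> \<Longrightarrow> \<theta>2 \<in> supp \<phi> \<Longrightarrow>
           V \<theta>1 \<theta>2 + V \<theta>2 \<theta>1 \<le> V \<theta>1 \<theta>1 + V \<theta>2 \<theta>2"
  shows "optimal (\<lambda>a \<theta>. \<theta> - a) V \<phi> (full_disclosure (\<lambda>\<theta>. \<theta>) \<phi>)"
proof -
  obtain W v K M where sender: "convex_sender_axioms (supp \<phi>) W v K M"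
    and W_eq: "\<And>a \<theta>. a \<in> {0..1} \<Longrightarrow> \<theta> \<in> {0..1} \<Longrightarrow> W a \<theta> = V a \<theta>"
    using assumption1_convex_sender_axioms[OF assms(2,3) prior_supp_subset[OF assms(1)] assms(4)]
    by blast
  have "(\<lambda>(a, \<theta>). \<theta> - a :: real) \<in> borel_measurable borel"
    unfolding borel_prod[symmetric] by measurable
  then show ?thesis
    unfolding optimal_def
    using implementable_full_disclosure[OF assms(1)]
      value_le_full_disclosure[OF assms(1) _ convex_sender.intro[OF _ sender] W_eq]
      obedient_outcome_of_implementable[OF assms(1)]
    by simp
qed

end
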